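(* Consider the two-valued atomic model under the Shapley scheme, with $n_b$ large players of stake $a$ and $n_s$ small players of stake $1$. If $n_s\ge (2h-1)^2+n_b\cdot(h+1)$, then the Price of Stability is at most $2$.
   Context: Atomic model: a finite set $N$ of players, player $i$ having stake $a_i>0$; threshold $h$. Two-valued: every player has stake either $1$ (small) or $a$ (large), where $h$ and $a$ are integers with $2\le a\le h-1$. Each player either opens her own pool or joins one; pools partition $N$. A pool $S$ has reward $\rho(S)=1$ if $\sum_{i\in S}a_i\ge h$ (winning pool) and $0$ otherwise. Shapley scheme: player $i$ in pool $S$ receives $\phi_i(S)=\sum_{T\subseteq S\setminus\{i\}}\frac{|T|!(|S|-|T|-1)!}{|S|!}(\rho(T\cup\{i\})-\rho(T))$. A partition of $N$ into winning pools is a Nash equilibrium if no player can strictly increase her payment by moving to another pool of the partition or by opening a new pool alone. $OPT(G)$ is the maximum number $t$ such that $N$ can be partitioned into $t$ pools each of stake at least $h$; $W(\Pi)$ is the number of winning pools of $\Pi$; the Price of Stability is $\min_\Pi OPT(G)/W(\Pi)$ over Nash equilibrium partitions $\Pi$. *)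

theory Defs
  imports Complex_Main "HOL-Library.Disjoint_Sets"
begin

definition pool_stake :: "('a \<Rightarrow> nat) \<Rightarrow> 'a set \<Rightarrow> nat" where
  "pool_stake stake S = (\<Sum>i\<in>S. stake i)"

definition winning :: "('a \<Rightarrow> nat) \<Rightarrow> nat \<Rightarrow> 'a set \<Rightarrow> bool" where
  "winning stake h S \<longleftrightarrow> pool_stake stake S \<ge> h"

definition rho :: "('a \<Rightarrow> nat) \<Rightarrow> nat \<Rightarrow> 'a set \<Rightarrow> real" where
  "rho stake h S = (if winning stake h S then 1 else 0)"

definition shapley :: "('a \<Rightarrow> nat) \<Rightarrow> nat \<Rightarrow> 'a set \<Rightarrow> 'a \<Rightarrow> real" where
  "shapley stake h S i =
     (\<Sum>T\<in>Pow (S - {i}).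
        (fact (card T) * fact (card S - card T - 1) / fact (card S))
        * (rho stake h (insert i T) - rho stake h T))"

definition nash_eq :: "'a set \<Rightarrow> ('a \<Rightarrow> nat) \<Rightarrow> nat \<Rightarrow> 'a set set \<Rightarrow> bool" where
  "nash_eq N stake h P \<longleftrightarrow>
     partition_on N P \<and> (\<forall>S\<in>P. winning stake h S) \<and>
     (\<forall>S\<in>P. \<forall>i\<in>S.
        (\<forall>S'\<in>P. S' \<noteq> S \<longrightarrow> shapley stake h (insert i S') i \<le> shapley stake h S i) \<and>
        shapley stake h {i} i \<le> shapley stake h S i)"

definition OPT :: "'a set \<Rightarrow> ('a \<Rightarrow> nat) \<Rightarrow> nat \<Rightarrow> nat" where
  "OPT N stake h = Max {card P | P. partition_on N P \<and> (\<forall>S\<in>P. winning stake h S)}"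

definition num_winning :: "('a \<Rightarrow> nat) \<Rightarrow> nat \<Rightarrow> 'a set set \<Rightarrow> nat" where
  "num_winning stake h P = card {S\<in>P. winning stake h S}"

end

theory Submission
  imports Defs
begin

text \<open>
  Write \<open>h = a + d\<close>. A player's Shapley value in a pool is the probability that she is
  pivotal in a uniformly random order of the pool, which gives closed forms for the two pool
  shapes used here: a \<^emph>\<open>big pool\<close> consisting of one large player and \<open>m\<close> small players, and a
  \<^emph>\<open>unit pool\<close> of \<open>t - 1\<close> or \<open>t\<close> small players. For suitable \<open>d \<le> m < h < t \<le> 2 h\<close>
  every small player gets at least \<open>1 / t\<close> and every large player gets \<open>(m + 1 - d) / (m + 1)\<close>,
  while any unilateral move yields at most that much, so a partition into such pools is a Nash
  equilibrium. The hypothesis on \<open>n\<^sub>s\<close> leaves enough small players to give every large player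
  \<open>m\<close> companions and to split the rest into pools of size \<open>t - 1\<close> or \<open>t\<close>. Each such pool has
  stake at most \<open>2 h\<close>, while every pool of an optimal partition has stake at least \<open>h\<close>; hence
  \<open>h \<cdot> OPT \<le> 2 h \<cdot> W\<close>.
\<close>

section \<open>Shapley values in pools of small players\<close>

definition pivotal :: "nat \<Rightarrow> nat \<Rightarrow> nat \<Rightarrow> bool" where
  "pivotal h s x \<longleftrightarrow> s < h \<and> h \<le> s + x"

lemma rho_insert_diff:
  assumes "finite T" "i \<notin> T"
  shows "rho stake h (insert i T) - rho stake h T = of_bool (pivotal h (pool_stake stake T) (stake i))"
  using assms by (auto simp: rho_def winning_def pool_stake_def pivotal_def)

lemma shapley_eq_sum_pivotal:
  assumes "finite S"
  shows "shapley stake h S i = (\<Sum>T\<in>Pow (S - {i}).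
    fact (card T) * fact (card S - card T - 1) / fact (card S) *
    of_bool (pivotal h (pool_stake stake T) (stake i)))"
  unfolding shapley_def
proof (rule sum.cong[OF refl])
  fix T assume "T \<in> Pow (S - {i})"
  then have "finite T" "i \<notin> T"
    using assms finite_subset by auto
  then show "fact (card T) * fact (card S - card T - 1) / fact (card S) *
      (rho stake h (insert i T) - rho stake h T) =
    fact (card T) * fact (card S - card T - 1) / fact (card S) *
      of_bool (pivotal h (pool_stake stake T) (stake i))"
    by (simp add: rho_insert_diff)
qed

lemma shapley_nonneg: "0 \<le> shapley stake h S i"
proof (cases "finite S")
  case True
  then show ?thesis
    by (simp add: shapley_eq_sum_pivotal sum_nonneg)
next
  case False
  then show ?thesis
    by (simp add: shapley_def)
qed

lemma shapley_singleton:
  assumes "stake i < h"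
  shows "shapley stake h {i} i = 0"
  using assms by (simp add: shapley_eq_sum_pivotal pool_stake_def pivotal_def)

lemma sum_Pow_by_card:
  assumes "finite X"
  shows "(\<Sum>T\<in>Pow X. f (card T)) = (\<Sum>k\<le>card X. of_nat (card X choose k) * f k)"
proof -
  have "(\<Sum>T\<in>Pow X. f (card T)) = (\<Sum>k\<le>card X. \<Sum>T\<in>{T. T \<in> Pow X \<and> card T = k}. f (card T))"
    by (rule sum.group[symmetric]) (auto simp: assms card_mono)
  also have "\<dots> = (\<Sum>k\<le>card X. of_nat (card X choose k) * f k)"
    by (rule sum.cong) (simp_all add: n_subsets[OF assms, symmetric])
  finally show ?thesis .
qed

lemma pool_stake_units: "\<forall>j\<in>T. stake j = 1 \<Longrightarrow> pool_stake stake T = card T"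
  by (simp add: pool_stake_def)

text \<open>A player of stake \<open>x\<close> among \<open>b\<close> players of stake 1: the number \<open>l\<close> of them preceding
  her in a random order is uniform on \<open>{0..b}\<close>.\<close>

definition shapley_units :: "nat \<Rightarrow> nat \<Rightarrow> nat \<Rightarrow> real" where
  "shapley_units h b x = real (card {l\<in>{..b}. pivotal h l x}) / real (b + 1)"

lemma shapley_eq_shapley_units:
  assumes "finite S" "i \<in> S" "\<forall>j\<in>S - {i}. stake j = 1" "card S = b + 1"
  shows "shapley stake h S i = shapley_units h b (stake i)"
proof -
  have card: "card (S - {i}) = b"
    using assms by simp
  have "shapley stake h S i = (\<Sum>T\<in>Pow (S - {i}).
      fact (card T) * fact (b - card T) / fact (b + 1) * of_bool (pivotal h (card T) (stake i)))"
    unfolding shapley_eq_sum_pivotal[OF assms(1)]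
    using assms(3,4) by (intro sum.cong) (auto simp: pool_stake_units subset_iff)
  also have "\<dots> = (\<Sum>k\<le>b. of_nat (b choose k) *
      (fact k * fact (b - k) / fact (b + 1) * of_bool (pivotal h k (stake i))))"
    using sum_Pow_by_card[of "S - {i}"
        "\<lambda>k. fact k * fact (b - k) / fact (b + 1) * of_bool (pivotal h k (stake i)) :: real"]
    using assms(1) by (simp only: card finite_Diff)
  also have "\<dots> = (\<Sum>k\<le>b. of_bool (pivotal h k (stake i)) / real (b + 1))"
    by (intro sum.cong) (simp_all add: binomial_fact fact_Suc del: of_nat_Suc)
  also have "\<dots> = shapley_units h b (stake i)"
    by (simp add: shapley_units_def sum_divide_distrib[symmetric] of_bool_def sum.If_cases Int_def)
  finally show ?thesis .
qed

lemma sum_Pow_insert: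
  assumes "finite B" "L \<notin> B"
  shows "(\<Sum>T\<in>Pow (insert L B). f T) = (\<Sum>T\<in>Pow B. f T) + (\<Sum>T\<in>Pow B. f (insert L T))"
proof -
  have "inj_on (insert L) (Pow B)"
    using assms(2) by (intro inj_onI) (metis Diff_insert_absorb PowD subset_iff)
  then show ?thesis
    unfolding Pow_insert using assms
    by (subst sum.union_disjoint) (auto simp: sum.reindex)
qed

text \<open>A player of stake \<open>x\<close> among \<open>b\<close> players of stake 1 and one of stake \<open>a\<close>. If \<open>l\<close> of
  the unit players precede her, the big player follows her in \<open>b + 1 - l\<close> and precedes her in
  \<open>l + 1\<close> of the \<open>(b + 1) (b + 2)\<close> equally likely relative positions.\<close>

definition shapley_units_big :: "nat \<Rightarrow> nat \<Rightarrow> nat \<Rightarrow> nat \<Rightarrow> real" where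
  "shapley_units_big h a b x =
     real (\<Sum>l\<le>b. (if pivotal h l x then b + 1 - l else 0) + (if pivotal h (a + l) x then l + 1 else 0))
     / (real (b + 1) * real (b + 2))"

lemma choose_mult_fact_ratio:
  assumes "k \<le> b"
  shows "real (b choose k) * (fact k * fact (b + 1 - k) / fact (b + 2))
      = real (b + 1 - k) / (real (b + 1) * real (b + 2))"
    and "real (b choose k) * (fact (k + 1) * fact (b - k) / fact (b + 2))
      = real (k + 1) / (real (b + 1) * real (b + 2))"
proof -
  have "fact (b + 1 - k) = real (b + 1 - k) * (fact (b - k) :: real)"
    using assms by (simp add: Suc_diff_le)
  then show "real (b choose k) * (fact k * fact (b + 1 - k) / fact (b + 2))
      = real (b + 1 - k) / (real (b + 1) * real (b + 2))"
    using assms by (simp add: binomial_fact fact_Suc field_simps del: of_nat_Suc)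
  show "real (b choose k) * (fact (k + 1) * fact (b - k) / fact (b + 2))
      = real (k + 1) / (real (b + 1) * real (b + 2))"
    using assms by (simp add: binomial_fact fact_Suc field_simps del: of_nat_Suc)
qed

lemma shapley_eq_shapley_units_big:
  assumes "finite S" "i \<in> S" "L \<in> S" "L \<noteq> i" "stake L = a"
    and "\<forall>j\<in>S - {i, L}. stake j = 1" "card S = b + 2"
  shows "shapley stake h S i = shapley_units_big h a b (stake i)"
proof -
  define B where "B = S - {i, L}"
  have B: "finite B" "L \<notin> B" "card B = b" "S - {i} = insert L B"
    using assms unfolding B_def by (auto simp: card_Diff_subset)
  define w :: "nat \<Rightarrow> nat \<Rightarrow> real" where
    "w k j = fact k * fact j / fact (b + 2)" for k j
  have units: "pool_stake stake T = card T" if "T \<in> Pow B" for T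
    using that assms(6) unfolding B_def by (intro pool_stake_units) auto
  have "shapley stake h S i = (\<Sum>T\<in>Pow B. w (card T) (b + 1 - card T) * of_bool (pivotal h (card T) (stake i)))
      + (\<Sum>T\<in>Pow B. w (card T + 1) (b - card T) * of_bool (pivotal h (a + card T) (stake i)))"
    unfolding shapley_eq_sum_pivotal[OF assms(1)] B(4) sum_Pow_insert[OF B(1,2)]
  proof (intro arg_cong2[where f = "(+)"] sum.cong refl)
    fix T assume T: "T \<in> Pow B"
    then have "finite T" "L \<notin> T" "card T \<le> b"
      using B card_mono by (auto simp: finite_subset)
    then show "fact (card (insert L T)) * fact (card S - card (insert L T) - 1) / fact (card S) *
        of_bool (pivotal h (pool_stake stake (insert L T)) (stake i)) =
      w (card T + 1) (b - card T) * of_bool (pivotal h (a + card T) (stake i))"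
      using units[OF T] assms(5,7) by (simp add: w_def pool_stake_def)
    show "fact (card T) * fact (card S - card T - 1) / fact (card S) *
        of_bool (pivotal h (pool_stake stake T) (stake i)) =
      w (card T) (b + 1 - card T) * of_bool (pivotal h (card T) (stake i))"
      using units[OF T] assms(7) by (simp add: w_def)
  qed
  also have "\<dots> = (\<Sum>k\<le>b. of_nat (b choose k) * (w k (b + 1 - k) * of_bool (pivotal h k (stake i))))
      + (\<Sum>k\<le>b. of_nat (b choose k) * (w (k + 1) (b - k) * of_bool (pivotal h (a + k) (stake i))))"
    using sum_Pow_by_card[OF B(1), of "\<lambda>k. w k (b + 1 - k) * of_bool (pivotal h k (stake i))"]
      sum_Pow_by_card[OF B(1), of "\<lambda>k. w (k + 1) (b - k) * of_bool (pivotal h (a + k) (stake i))"]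
    by (simp only: B(3))
  also have "\<dots> = shapley_units_big h a b (stake i)"
  proof -
    have "of_nat (b choose k) * w k (b + 1 - k) = real (b + 1 - k) / (real (b + 1) * real (b + 2))"
      and "of_nat (b choose k) * w (k + 1) (b - k) = real (k + 1) / (real (b + 1) * real (b + 2))"
      if "k \<le> b" for k
      using choose_mult_fact_ratio[OF that] unfolding w_def by simp_all
    then show ?thesis
      unfolding shapley_units_big_def sum.distrib[symmetric] sum_divide_distrib of_nat_sum
      by (intro sum.cong) (auto simp: add_divide_distrib)
  qed
  finally show ?thesis .
qed

lemma real_divide_le_real_divide_iff:
  fixes x y z w :: nat
  assumes "0 < y" "0 < w"
  shows "real x / real y \<le> real z / real w \<longleftrightarrow> x * w \<le> z * y"
proof -
  have "real x / real y \<le> real z / real w \<longleftrightarrow> real x * real w \<le> real z * real y"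
    using assms by (simp add: divide_le_eq le_divide_eq field_simps)
  also have "\<dots> \<longleftrightarrow> x * w \<le> z * y"
    by (metis of_nat_le_iff of_nat_mult)
  finally show ?thesis .
qed

lemma shapley_units_full:
  assumes "x \<le> h" "h \<le> b + 1"
  shows "shapley_units h b x = real x / real (b + 1)"
proof -
  have "{l\<in>{..b}. pivotal h l x} = {h - x..<h}"
    using assms by (auto simp: pivotal_def)
  then show ?thesis
    using assms by (simp add: shapley_units_def)
qed

lemma shapley_units_partial:
  assumes "x \<le> h" "h \<le> m + x" "m < h"
  shows "shapley_units h m x = real (m + x + 1 - h) / real (m + 1)"
proof -
  have "{l\<in>{..m}. pivotal h l x} = {h - x..m}"
    using assms by (auto simp: pivotal_def)
  then show ?thesis
    using assms by (simp add: shapley_units_def)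
qed

lemma shapley_units_big_unit:
  assumes "1 \<le> d" "d \<le> b + 1" "b < a + d"
  shows "shapley_units_big (a + d) a b 1 =
    real (d + of_bool (b + 1 = a + d)) / (real (b + 1) * real (b + 2))"
proof -
  have "(\<Sum>l\<le>b. (if pivotal (a + d) l 1 then b + 1 - l else 0)
        + (if pivotal (a + d) (a + l) 1 then l + 1 else 0))
      = (\<Sum>l\<le>b. (if l = a + d - 1 then 1 else 0)) + (\<Sum>l\<le>b. (if l = d - 1 then d else 0))"
    unfolding sum.distrib[symmetric]
    using assms by (intro sum.cong) (auto simp: pivotal_def)
  also have "\<dots> = d + of_bool (b + 1 = a + d)"
    using assms by auto
  finally show ?thesis
    by (simp add: shapley_units_big_def)
qed

lemma double_sum_atLeastLessThan_Suc:
  fixes p k :: nat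
  shows "2 * (\<Sum>l\<in>{p..<p + k}. l + 1) = k * (2 * p + k + 1)"
  by (induction k) (auto simp: algebra_simps)

lemma double_sum_atLeastLessThan_rev:
  fixes p k :: nat
  shows "2 * (\<Sum>l\<in>{p..<p + k}. p + k - l) = k * (k + 1)"
proof (induction k arbitrary: p)
  case (Suc k)
  have "{p..<p + Suc k} = insert p {Suc p..<Suc p + k}"
    by auto
  then show ?case
    using Suc.IH[of "Suc p"] by (simp add: algebra_simps)
qed simp

lemma shapley_units_big_big:
  assumes "d \<le> m" "m < a + d"
  shows "shapley_units_big (a + d) a m a =
    real ((m + 1 - d) * (m + 2 - d) + min a d * (2 * d + 1 - min a d))
    / (2 * real (m + 1) * real (m + 2))"
proof -
  define u c where "u = m + 1 - d" and "c = min a d"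
  define S where "S = (\<Sum>l\<le>m. (if pivotal (a + d) l a then m + 1 - l else 0)
        + (if pivotal (a + d) (a + l) a then l + 1 else 0))"
  have "S = (\<Sum>l\<in>{d..<d + u}. d + u - l) + (\<Sum>l\<in>{d - c..<d - c + c}. l + 1)"
    unfolding S_def sum.distrib[of "\<lambda>l. if pivotal (a + d) l a then m + 1 - l else 0"]
      sum.inter_filter[OF finite_atMost, symmetric]
  proof (intro arg_cong2[where f = "(+)"])
    have "{l\<in>{..m}. pivotal (a + d) l a} = {d..<d + u}"
      using assms unfolding u_def by (auto simp: pivotal_def)
    then show "(\<Sum>l\<in>{l\<in>{..m}. pivotal (a + d) l a}. m + 1 - l) = (\<Sum>l\<in>{d..<d + u}. d + u - l)"
      using assms unfolding u_def by (intro sum.cong) auto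
    show "(\<Sum>l\<in>{l\<in>{..m}. pivotal (a + d) (a + l) a}. l + 1) = (\<Sum>l\<in>{d - c..<d - c + c}. l + 1)"
      using assms unfolding c_def by (intro sum.cong) (auto simp: pivotal_def)
  qed
  also have "2 * \<dots> = u * (u + 1) + c * (2 * (d - c) + c + 1)"
    unfolding distrib_left double_sum_atLeastLessThan_Suc double_sum_atLeastLessThan_rev ..
  also have "\<dots> = (m + 1 - d) * (m + 2 - d) + c * (2 * d + 1 - c)"
  proof -
    have "2 * (d - c) + c + 1 = 2 * d + 1 - c" "u * (u + 1) = (m + 1 - d) * (m + 2 - d)"
      using assms unfolding u_def c_def by (auto simp: Suc_diff_le)
    then show ?thesis
      by (simp only:)
  qed
  finally have "2 * S = (m + 1 - d) * (m + 2 - d) + min a d * (2 * d + 1 - min a d)"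
    unfolding c_def .
  moreover have "real S = real z / 2" if "2 * S = z" for z
    using that by auto
  ultimately have "real S = real ((m + 1 - d) * (m + 2 - d) + min a d * (2 * d + 1 - min a d)) / 2"
    by blast
  then show ?thesis
    unfolding shapley_units_big_def S_def[symmetric] by (simp only: divide_divide_eq_left mult_ac)
qed

lemma shapley_units_big_big_le:
  assumes "d \<le> m" "m < a + d"
    and "min a d * (2 * d + 1 - min a d) \<le> (m + 1 - d) * (m + d + 2)"
  shows "shapley_units_big (a + d) a m a \<le> real (m + 1 - d) / real (m + 1)"
proof -
  obtain v where v: "m = d + v"
    using assms(1) le_Suc_ex by blast
  have e: "m + 1 - d = v + 1" "m + d + 2 = 2 * d + v + 2"
    using v by simp_all
  have "(v + 1) * (v + 2) + X \<le> (v + 1) * (2 * (d + v + 2))" if "X \<le> (v + 1) * (2 * d + v + 2)" for X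
    using that by (simp add: algebra_simps)
  from this[OF assms(3)[unfolded e]]
  have "(m + 1 - d) * (m + 2 - d) + min a d * (2 * d + 1 - min a d) \<le> (m + 1 - d) * (2 * (m + 2))"
    using v by simp
  then have "((m + 1 - d) * (m + 2 - d) + min a d * (2 * d + 1 - min a d)) * (m + 1)
      \<le> (m + 1 - d) * (2 * (m + 2)) * (m + 1)"
    by (rule mult_le_mono1)
  also have "\<dots> = (m + 1 - d) * (2 * (m + 1) * (m + 2))"
    by (simp only: mult_ac)
  finally have "real ((m + 1 - d) * (m + 2 - d) + min a d * (2 * d + 1 - min a d)) / real (2 * (m + 1) * (m + 2))
      \<le> real (m + 1 - d) / real (m + 1)"
    by (intro real_divide_le_real_divide_iff[THEN iffD2]) simp_all
  then show ?thesis
    unfolding shapley_units_big_big[OF assms(1,2)] by (simp only: of_nat_mult of_nat_numeral)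
qed

section \<open>Stability of a partition into big pools and unit pools\<close>

definition big_pool :: "('a \<Rightarrow> nat) \<Rightarrow> nat \<Rightarrow> nat \<Rightarrow> 'a set \<Rightarrow> bool" where
  "big_pool stake a m S \<longleftrightarrow> (\<exists>L\<in>S. stake L = a \<and> (\<forall>j\<in>S - {L}. stake j = 1) \<and> card S = m + 1)"

definition unit_pool :: "('a \<Rightarrow> nat) \<Rightarrow> nat \<Rightarrow> 'a set \<Rightarrow> bool" where
  "unit_pool stake t S \<longleftrightarrow> (\<forall>j\<in>S. stake j = 1) \<and> card S \<le> t \<and> t \<le> card S + 1"

lemma pool_stake_big_pool:
  assumes "big_pool stake a m S"
  shows "pool_stake stake S = a + m"
proof -
  obtain L where L: "L \<in> S" "stake L = a" "\<forall>j\<in>S - {L}. stake j = 1" "card S = m + 1"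
    using assms unfolding big_pool_def by blast
  then have "finite S"
    by (simp add: card_ge_0_finite)
  with L show ?thesis
    unfolding pool_stake_def by (simp add: sum.remove)
qed

lemma shapley_insert_big_pool:
  assumes "big_pool stake a m S" "i \<notin> S"
  shows "shapley stake h (insert i S) i = shapley_units_big h a m (stake i)"
proof -
  obtain L where L: "L \<in> S" "stake L = a" "\<forall>j\<in>S - {L}. stake j = 1" "card S = m + 1"
    using assms(1) unfolding big_pool_def by blast
  then have "finite S"
    by (simp add: card_ge_0_finite)
  with L assms(2) show ?thesis
    by (intro shapley_eq_shapley_units_big) auto
qed

lemma shapley_insert_units:
  assumes "finite S" "\<forall>j\<in>S. stake j = 1" "i \<notin> S"
  shows "shapley stake h (insert i S) i = shapley_units h (card S) (stake i)"
  using assms by (intro shapley_eq_shapley_units) auto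

lemma big_pool_remove_unit:
  assumes "big_pool stake a m S" "i \<in> S" "stake i \<noteq> a"
  shows "big_pool stake a (m - 1) (S - {i})"
proof -
  obtain L where L: "L \<in> S" "stake L = a" "\<forall>j\<in>S - {L}. stake j = 1" "card S = m + 1"
    using assms(1) unfolding big_pool_def by blast
  moreover have "L \<noteq> i"
    using L(2) assms(3) by blast
  moreover have "finite S"
    using L(4) by (simp add: card_ge_0_finite)
  moreover have "1 \<le> m"
    using calculation assms(2) card_mono[of S "{L, i}"] by auto
  ultimately show ?thesis
    unfolding big_pool_def using assms(2) by (intro bexI[of _ L]) auto
qed

lemma big_pool_remove_big:
  assumes "big_pool stake a m S" "i \<in> S" "stake i = a" "a \<noteq> 1"
  shows "finite (S - {i})" "\<forall>j\<in>S - {i}. stake j = 1" "card (S - {i}) = m"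
proof -
  obtain L where L: "L \<in> S" "stake L = a" "\<forall>j\<in>S - {L}. stake j = 1" "card S = m + 1"
    using assms(1) unfolding big_pool_def by blast
  moreover have "L = i"
    using L(3) assms(2-4) by force
  ultimately show "finite (S - {i})" "\<forall>j\<in>S - {i}. stake j = 1" "card (S - {i}) = m"
    by (auto simp: card_ge_0_finite)
qed

text \<open>Here \<open>h = a + d\<close>. The last four assumptions say, in this order, that a small player in
  a big pool does not gain by moving to a unit pool, that no small player gains by joining a big
  pool, and that the large player of a big pool gains neither by joining a unit pool nor by
  joining another big pool.\<close>

locale stable_params =
  fixes a d m t :: nat
  assumes two_le_a: "2 \<le> a" and one_le_d: "1 \<le> d"
    and d_le_m: "d \<le> m" and m_less: "m < a + d" and less_t: "a + d < t"
    and unit_stays: "m * (m + 1) \<le> t * d"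
    and unit_joins_big: "t * (d + of_bool (m + 1 = a + d)) \<le> (m + 1) * (m + 2)"
    and big_joins_units: "a * (m + 1) \<le> t * (m + 1 - d)"
    and big_joins_big: "min a d * (2 * d + 1 - min a d) \<le> (m + 1 - d) * (m + d + 2)"
begin

lemma unit_pool_finite: "unit_pool stake t S \<Longrightarrow> finite S"
  using less_t two_le_a by (intro card_ge_0_finite) (auto simp: unit_pool_def)

lemma shaped_pool_winning:
  assumes "big_pool stake a m S \<or> unit_pool stake t S"
  shows "winning stake (a + d) S"
  using assms d_le_m less_t
  by (auto simp: winning_def pool_stake_big_pool unit_pool_def pool_stake_units)

lemma shaped_pool_stake_le:
  assumes "big_pool stake a m S \<or> unit_pool stake t S"
  shows "pool_stake stake S \<le> max (a + m) t"
  using assms by (auto simp: pool_stake_big_pool unit_pool_def pool_stake_units)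

lemma unit_deviation_le:
  assumes "big_pool stake a m S \<or> unit_pool stake t S" "i \<notin> S" "stake i = 1"
  shows "shapley stake (a + d) (insert i S) i \<le> 1 / real t"
  using assms(1)
proof
  assume "big_pool stake a m S"
  then have "shapley stake (a + d) (insert i S) i = shapley_units_big (a + d) a m 1"
    using assms(2,3) by (simp add: shapley_insert_big_pool)
  also have "\<dots> = real (d + of_bool (m + 1 = a + d)) / real ((m + 1) * (m + 2))"
    using d_le_m m_less one_le_d by (subst shapley_units_big_unit) (auto simp: algebra_simps)
  also have "\<dots> \<le> 1 / real t"
    using unit_joins_big less_t
    by (intro real_divide_le_real_divide_iff[where z = 1, unfolded of_nat_1, THEN iffD2])
      (auto simp: mult.commute)
  finally show ?thesis .
next
  assume unit: "unit_pool stake t S"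
  then have "shapley stake (a + d) (insert i S) i = shapley_units (a + d) (card S) 1"
    using shapley_insert_units[OF unit_pool_finite[OF unit] _ assms(2)] assms(3)
    by (simp add: unit_pool_def)
  also have "\<dots> = 1 / real (card S + 1)"
    using unit less_t two_le_a by (subst shapley_units_full) (auto simp: unit_pool_def)
  also have "\<dots> \<le> 1 / real t"
    using unit less_t
    by (intro real_divide_le_real_divide_iff[where x = 1 and z = 1, unfolded of_nat_1, THEN iffD2])
      (auto simp: unit_pool_def)
  finally show ?thesis .
qed

lemma unit_value_ge:
  assumes "big_pool stake a m S \<or> unit_pool stake t S" "i \<in> S" "stake i = 1"
  shows "1 / real t \<le> shapley stake (a + d) S i"
  using assms(1)
proof
  assume "big_pool stake a m S"
  then have rest: "big_pool stake a (m - 1) (S - {i})"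
    using assms(2,3) two_le_a by (intro big_pool_remove_unit) auto
  have "1 / real t \<le> real d / real (m * (m + 1))"
    using unit_stays less_t d_le_m one_le_d
    by (intro real_divide_le_real_divide_iff[where x = 1, unfolded of_nat_1, THEN iffD2]) (auto simp: mult.commute)
  also have "\<dots> = shapley_units_big (a + d) a (m - 1) 1"
    using d_le_m m_less one_le_d by (subst shapley_units_big_unit) (auto simp: algebra_simps)
  also have "\<dots> = shapley stake (a + d) S i"
    using shapley_insert_big_pool[OF rest, of i "a + d"] assms(2,3) by (simp add: insert_absorb)
  finally show ?thesis .
next
  assume unit: "unit_pool stake t S"
  then have "finite S" "0 < card S"
    using assms(2) unit_pool_finite card_gt_0_iff by blast+
  have "1 / real t \<le> 1 / real (card S)"
    using unit \<open>0 < card S\<close> less_t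
    by (intro real_divide_le_real_divide_iff[where x = 1 and z = 1, unfolded of_nat_1, THEN iffD2])
      (auto simp: unit_pool_def)
  also have "\<dots> = shapley_units (a + d) (card S - 1) 1"
    using unit less_t two_le_a \<open>0 < card S\<close> by (subst shapley_units_full) (auto simp: unit_pool_def)
  also have "\<dots> = shapley stake (a + d) S i"
    using shapley_insert_units[of "S - {i}" stake i "a + d"] unit assms(2,3) \<open>finite S\<close>
    by (simp add: insert_absorb unit_pool_def)
  finally show ?thesis .
qed

lemma big_value:
  assumes "big_pool stake a m S \<or> unit_pool stake t S" "i \<in> S" "stake i = a"
  shows "shapley stake (a + d) S i = real (m + 1 - d) / real (m + 1)"
proof -
  have "big_pool stake a m S"
    using assms two_le_a by (auto simp: unit_pool_def)
  then have rest: "finite (S - {i})" "\<forall>j\<in>S - {i}. stake j = 1" "card (S - {i}) = m"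
    using big_pool_remove_big[of stake a m S i] assms(2,3) two_le_a by auto
  have "shapley stake (a + d) S i = shapley_units (a + d) m a"
    using shapley_insert_units[OF rest(1,2), of i "a + d"] rest(3) assms(2,3) by (simp add: insert_absorb)
  also have "\<dots> = real (m + 1 - d) / real (m + 1)"
    using d_le_m m_less by (subst shapley_units_partial) auto
  finally show ?thesis .
qed

lemma big_deviation_le:
  assumes "big_pool stake a m S \<or> unit_pool stake t S" "i \<notin> S" "stake i = a"
  shows "shapley stake (a + d) (insert i S) i \<le> real (m + 1 - d) / real (m + 1)"
  using assms(1)
proof
  assume "big_pool stake a m S"
  then have "shapley stake (a + d) (insert i S) i = shapley_units_big (a + d) a m a"
    using assms(2,3) by (simp add: shapley_insert_big_pool)
  also have "\<dots> \<le> real (m + 1 - d) / real (m + 1)"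
    using d_le_m m_less big_joins_big by (rule shapley_units_big_big_le)
  finally show ?thesis .
next
  assume unit: "unit_pool stake t S"
  then have "shapley stake (a + d) (insert i S) i = shapley_units (a + d) (card S) a"
    using shapley_insert_units[OF unit_pool_finite[OF unit] _ assms(2)] assms(3)
    by (simp add: unit_pool_def)
  also have "\<dots> = real a / real (card S + 1)"
    using unit less_t by (subst shapley_units_full) (auto simp: unit_pool_def)
  also have "\<dots> \<le> real (m + 1 - d) / real (m + 1)"
  proof (intro real_divide_le_real_divide_iff[THEN iffD2])
    have "a * (m + 1) \<le> t * (m + 1 - d)"
      by (rule big_joins_units)
    also have "\<dots> \<le> (card S + 1) * (m + 1 - d)"
      using unit by (intro mult_le_mono1) (simp add: unit_pool_def)
    finally show "a * (m + 1) \<le> (m + 1 - d) * (card S + 1)"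
      by (simp only: mult.commute)
  qed auto
  finally show ?thesis .
qed

theorem nash_eq_shaped_partition:
  assumes "partition_on N P" "\<forall>i\<in>N. stake i = 1 \<or> stake i = a"
    and "\<forall>S\<in>P. big_pool stake a m S \<or> unit_pool stake t S"
  shows "nash_eq N stake (a + d) P"
  unfolding nash_eq_def
proof (intro conjI ballI)
  show "partition_on N P"
    by (rule assms(1))
  show "winning stake (a + d) S" if "S \<in> P" for S
    using assms(3) that by (blast intro: shaped_pool_winning)
  fix S i assume S: "S \<in> P" and i: "i \<in> S"
  have "stake i = 1 \<or> stake i = a"
    using assms(1,2) S i by (auto dest: partition_onD1)
  show "shapley stake (a + d) {i} i \<le> shapley stake (a + d) S i"
    using \<open>stake i = 1 \<or> stake i = a\<close> one_le_d two_le_a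
    by (auto simp: shapley_singleton shapley_nonneg)
  fix S' assume S': "S' \<in> P"
  show "S' \<noteq> S \<longrightarrow> shapley stake (a + d) (insert i S') i \<le> shapley stake (a + d) S i"
  proof
    assume "S' \<noteq> S"
    then have "i \<notin> S'"
      using assms(1) S S' i unfolding partition_on_def disjoint_def pairwise_def disjnt_def by blast
    have shaped: "big_pool stake a m S \<or> unit_pool stake t S" "big_pool stake a m S' \<or> unit_pool stake t S'"
      using assms(3) S S' by blast+
    from \<open>stake i = 1 \<or> stake i = a\<close>
    show "shapley stake (a + d) (insert i S') i \<le> shapley stake (a + d) S i"
    proof
      assume "stake i = 1"
      then show ?thesis
        using unit_deviation_le[OF shaped(2) \<open>i \<notin> S'\<close>] unit_value_ge[OF shaped(1) i] by fastforce
    next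
      assume "stake i = a"
      then show ?thesis
        using big_deviation_le[OF shaped(2) \<open>i \<notin> S'\<close>] big_value[OF shaped(1) i] by simp
    qed
  qed
qed

end

section \<open>Choice of the pool sizes\<close>

lemma exists_pronic_bracket: "\<exists>m::nat. m * (m + 1) \<le> X \<and> X < (m + 1) * (m + 2)"
proof (induction X)
  case 0
  then show ?case
    by (intro exI[of _ 0]) simp
next
  case (Suc X)
  then obtain m where m: "m * (m + 1) \<le> X" "X < (m + 1) * (m + 2)"
    by blast
  show ?case
  proof (cases "Suc X < (m + 1) * (m + 2)")
    case True
    then show ?thesis
      using m by (intro exI[of _ m]) simp
  next
    case False
    then show ?thesis
      using m by (intro exI[of _ "m + 1"]) (simp add: algebra_simps)
  qed
qed

lemma stable_params_if_square_le:
  assumes "2 \<le> a" "1 \<le> d" "a * a \<le> a + d"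
  shows "stable_params a d (a + d - 1) (2 * a + d)"
proof -
  obtain k where k: "a = k + 1"
    using assms(1) by (metis add.commute le_Suc_ex one_le_numeral le_trans Suc_eq_plus1 add_Suc_right)
  have "k * k + k \<le> d"
    using assms(3) unfolding k by (simp add: algebra_simps)
  moreover have "1 \<le> k * k"
    using assms(1) unfolding k by simp
  ultimately have "a \<le> d"
    using k by linarith
  show ?thesis
  proof
    show "min a d * (2 * d + 1 - min a d) \<le> (a + d - 1 + 1 - d) * (a + d - 1 + d + 2)"
      using \<open>a \<le> d\<close> assms(1) by (intro mult_le_mono) auto
  qed (use assms \<open>k * k + k \<le> d\<close> k in \<open>auto simp: algebra_simps\<close>)
qed

lemma pronic_bracket_bounds:
  fixes a d t m :: nat
  assumes "d < t" "t * d < (a + d - 1) * (a + d)"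
    and "m * (m + 1) \<le> t * d" "t * d < (m + 1) * (m + 2)"
  shows "d \<le> m" "m + 2 \<le> a + d"
proof -
  show "d \<le> m"
  proof (rule ccontr)
    assume "\<not> d \<le> m"
    then have "(m + 1) * (m + 2) \<le> d * (d + 1)"
      by (intro mult_le_mono) auto
    also have "\<dots> \<le> d * t"
      using assms(1) by (intro mult_le_mono2) linarith
    finally show False
      using assms(4) by (simp add: mult.commute)
  qed
  show "m + 2 \<le> a + d"
  proof (rule ccontr)
    assume "\<not> m + 2 \<le> a + d"
    then have "(a + d - 1) * (a + d) \<le> m * (m + 1)"
      by (intro mult_le_mono) auto
    then show False
      using assms(2,3) by linarith
  qed
qed

lemma min_mult_le_if_square_gt:
  fixes a d t u :: nat
  assumes "a + d < a * a" "2 * a + d \<le> t" "t * d + 1 \<le> (u + d) * (u + d + 1)"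
  shows "min a d * (2 * d + 1 - min a d) \<le> u * (u + 2 * d + 1)"
proof (cases "a \<le> d")
  case True
  have "(2 * a + d) * d \<le> t * d"
    using assms(2) by (rule mult_le_mono1)
  moreover have "a * (2 * d + 1 - a) + a * a = a * (2 * d + 1)"
  proof -
    have "(2 * d + 1 - a) + a = 2 * d + 1"
      using True by simp
    then show ?thesis
      by (metis distrib_left)
  qed
  ultimately show ?thesis
    using True assms(1,3) by (simp add: algebra_simps)
next
  case False
  have "(3 * d + 2) * d \<le> t * d"
    using assms(2) False by (intro mult_le_mono1) linarith
  then show ?thesis
    using False assms(3) by (simp add: algebra_simps)
qed

lemma stable_params_if_square_gt:
  assumes "2 \<le> a" "1 \<le> d" "a + d < a * a"
    and "2 * a + d \<le> t" "t * d < (a + d - 1) * (a + d)"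
    and "m * (m + 1) \<le> t * d" "t * d < (m + 1) * (m + 2)"
  shows "stable_params a d m t"
proof -
  have "d \<le> m" "m + 2 \<le> a + d"
    using pronic_bracket_bounds[of d t a m] assms by auto
  define u where "u = m + 1 - d"
  have mu: "m + 1 = u + d"
    unfolding u_def using \<open>d \<le> m\<close> by simp
  have "(m + 1) * (m + 2) = (u + d) * (u + d + 1)"
    by (simp add: mu[symmetric])
  then have bracket: "t * d + 1 \<le> (u + d) * (u + d + 1)"
    using assms(7) by linarith
  have "a * (m + 1) \<le> t * (m + 1 - d)"
  proof -
    have "u + d + 1 + a \<le> t"
      using \<open>m + 2 \<le> a + d\<close> mu assms(4) by linarith
    then have "(u + d + 1 + a) * (u + d) \<le> t * (u + d)"
      by (rule mult_le_mono1)
    then have "a * (u + d) \<le> t * u"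
      using bracket by (simp add: algebra_simps)
    then show ?thesis
      unfolding mu u_def[symmetric] by simp
  qed
  show ?thesis
  proof
    show "t * (d + of_bool (m + 1 = a + d)) \<le> (m + 1) * (m + 2)"
      using \<open>m + 2 \<le> a + d\<close> assms(7) by simp
    show "min a d * (2 * d + 1 - min a d) \<le> (m + 1 - d) * (m + d + 2)"
      using min_mult_le_if_square_gt[OF assms(3,4) bracket] mu unfolding u_def by (simp add: algebra_simps)
  qed (use assms \<open>d \<le> m\<close> \<open>m + 2 \<le> a + d\<close> \<open>a * (m + 1) \<le> t * (m + 1 - d)\<close> in auto)
qed

lemma exists_stable_params:
  assumes "2 \<le> a" "1 \<le> d"
  shows "\<exists>m t. stable_params a d m t \<and> t \<le> 2 * (a + d)"
proof (cases "a * a \<le> a + d")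
  case True
  then show ?thesis
    using stable_params_if_square_le[OF assms True] by fastforce
next
  case False
  txt \<open>Take \<open>t \<le> 2 h\<close> as large as possible with \<open>t d < (h - 1) h\<close>, and \<open>m\<close> with
    \<open>m (m + 1) \<le> t d < (m + 1) (m + 2)\<close>: these two inequalities are exactly the
    conditions for the small players.\<close>
  define X where "X = (a + d - 1) * (a + d) - 1"
  define t where "t = min (2 * (a + d)) (X div d)"
  have "(2 * a + d) * d \<le> X"
    using False assms unfolding X_def by (simp add: algebra_simps)
  then have "2 * a + d \<le> t"
    using assms unfolding t_def by (simp add: less_eq_div_iff_mult_less_eq)
  moreover have "t * d < (a + d - 1) * (a + d)"
  proof -
    have "t * d \<le> X"
      unfolding t_def by (meson min.cobounded2 div_times_less_eq_dividend le_trans mult_le_mono1)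
    moreover have "1 \<le> (a + d - 1) * (a + d)"
      using assms by simp
    ultimately show ?thesis
      unfolding X_def by linarith
  qed
  moreover obtain m where "m * (m + 1) \<le> t * d" "t * d < (m + 1) * (m + 2)"
    using exists_pronic_bracket by blast
  ultimately have "stable_params a d m t"
    using False assms by (intro stable_params_if_square_gt) auto
  moreover have "t \<le> 2 * (a + d)"
    unfolding t_def by simp
  ultimately show ?thesis
    by blast
qed

section \<open>Construction of the partition and the bound on the optimum\<close>

lemma partition_on_Un:
  assumes "partition_on A P" "partition_on B Q" "A \<inter> B = {}"
  shows "partition_on (A \<union> B) (P \<union> Q)"
proof (rule partition_onI)
  show "\<Union>(P \<union> Q) = A \<union> B"
    using partition_onD1[OF assms(1)] partition_onD1[OF assms(2)] by simp
  show "{} \<notin> P \<union> Q"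
    using partition_onD3[OF assms(1)] partition_onD3[OF assms(2)] by simp
  fix p q assume pq: "p \<in> P \<union> Q" "q \<in> P \<union> Q" "p \<noteq> q"
  have sub: "S \<subseteq> A" if "S \<in> P" for S
    using that partition_onD1[OF assms(1)] by blast
  have sub': "S \<subseteq> B" if "S \<in> Q" for S
    using that partition_onD1[OF assms(2)] by blast
  from pq consider "p \<in> P" "q \<in> P" | "p \<in> Q" "q \<in> Q" | "p \<in> P" "q \<in> Q" | "p \<in> Q" "q \<in> P"
    by blast
  then show "disjnt p q"
  proof cases
    case 1
    then show ?thesis
      using disjointD[OF partition_onD2[OF assms(1)]] pq(3) by (simp add: disjnt_def)
  next
    case 2
    then show ?thesis
      using disjointD[OF partition_onD2[OF assms(2)]] pq(3) by (simp add: disjnt_def)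
  next
    case 3
    then show ?thesis
      using sub sub' assms(3) by (fastforce simp: disjnt_def)
  next
    case 4
    then show ?thesis
      using sub sub' assms(3) by (fastforce simp: disjnt_def)
  qed
qed

lemma exists_partition_card_list:
  assumes "finite X" "card X = sum_list ns" "0 \<notin> set ns"
  shows "\<exists>P. partition_on X P \<and> (\<forall>S\<in>P. card S \<in> set ns)"
  using assms
proof (induction ns arbitrary: X)
  case Nil
  then show ?case
    by (intro exI[of _ "{}"]) (simp add: partition_on_empty)
next
  case (Cons n ns)
  obtain A where A: "A \<subseteq> X" "card A = n"
    using Cons.prems(2) by (metis obtain_subset_with_card_n le_add1 sum_list.Cons)
  then have "A \<noteq> {}" "finite A"
    using Cons.prems finite_subset by auto
  have "card (X - A) = sum_list ns"
    using Cons.prems(2) A \<open>finite A\<close> by (simp add: card_Diff_subset)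
  then obtain P where P: "partition_on (X - A) P" "\<forall>S\<in>P. card S \<in> set ns"
    using Cons.IH[of "X - A"] Cons.prems(1,3) by auto
  have "X = A \<union> (X - A)"
    using A by blast
  then show ?case
    using partition_on_Un[OF partition_on_space[OF \<open>A \<noteq> {}\<close>] P(1)] A P
    by (intro exI[of _ "{A} \<union> P"]) auto
qed

lemma exists_big_pools:
  assumes "finite B" "finite X" "B \<inter> X = {}" "card X = m * card B"
    and "\<forall>L\<in>B. stake L = a" "\<forall>j\<in>X. stake j = 1"
  shows "\<exists>P. partition_on (B \<union> X) P \<and> (\<forall>S\<in>P. big_pool stake a m S)"
  using assms
proof (induction B arbitrary: X rule: finite_induct)
  case empty
  then show ?case
    by (intro exI[of _ "{}"]) (simp add: partition_on_empty)
next
  case (insert L B)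
  obtain A where A: "A \<subseteq> X" "card A = m"
    using insert.prems(3) insert.hyps by (metis obtain_subset_with_card_n card_insert_disjoint le_add1 mult_Suc_right)
  obtain P where P: "partition_on (B \<union> (X - A)) P" "\<forall>S\<in>P. big_pool stake a m S"
    using insert.IH[of "X - A"] insert.prems insert.hyps A
    by (auto simp: card_Diff_subset finite_subset)
  have "L \<notin> A" "finite A"
    using A insert.prems(1,2) finite_subset by auto
  then have pool: "big_pool stake a m (insert L A)"
    unfolding big_pool_def using A insert.prems by (intro bexI[of _ L]) auto
  have "insert L B \<union> X = insert L A \<union> (B \<union> (X - A))"
    using A by blast
  moreover have "insert L A \<inter> (B \<union> (X - A)) = {}"
    using A insert.prems insert.hyps by blast
  ultimately show ?case
    using partition_on_Un[OF partition_on_space[of "insert L A"] P(1)] P pool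
    by (intro exI[of _ "{insert L A} \<union> P"]) auto
qed

lemma exists_two_size_split:
  fixes s R :: nat
  assumes "1 \<le> s" "s * s \<le> R"
  shows "\<exists>r q. r \<le> q \<and> R = r * (s + 1) + (q - r) * s"
proof -
  define q r where "q = R div s" and "r = R mod s"
  have "r \<le> q"
  proof -
    have "s \<le> q"
      using assms unfolding q_def by (simp add: less_eq_div_iff_mult_less_eq)
    moreover have "r < s"
      using assms unfolding r_def by simp
    ultimately show ?thesis
      by simp
  qed
  have "R = q * s + r"
    unfolding q_def r_def by simp
  moreover have "(q - r) * s = q * s - r * s" "r * s \<le> q * s"
    using \<open>r \<le> q\<close> by (simp_all add: diff_mult_distrib)
  ultimately have "R = r * (s + 1) + (q - r) * s"
    by (simp add: distrib_left)
  with \<open>r \<le> q\<close> show ?thesis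
    by blast
qed

lemma exists_unit_pools:
  assumes "finite U" "\<forall>j\<in>U. stake j = 1" "2 \<le> t" "(t - 1)\<^sup>2 \<le> card U"
  shows "\<exists>P. partition_on U P \<and> (\<forall>S\<in>P. unit_pool stake t S)"
proof -
  have "1 \<le> t - 1" "(t - 1) * (t - 1) \<le> card U"
    using assms(3,4) by (simp_all add: power2_eq_square)
  from exists_two_size_split[OF this]
  obtain r q where "card U = r * (t - 1 + 1) + (q - r) * (t - 1)"
    by blast
  define ns where "ns = replicate r (t - 1 + 1) @ replicate (q - r) (t - 1)"
  have "card U = sum_list ns"
    unfolding ns_def using \<open>card U = r * (t - 1 + 1) + (q - r) * (t - 1)\<close>
    by (simp add: sum_list_replicate)
  moreover have "set ns \<subseteq> {t - 1, t}" "0 \<notin> {t - 1, t}"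
    using assms(3) unfolding ns_def by auto
  ultimately obtain P where P: "partition_on U P" "\<forall>S\<in>P. card S \<in> {t - 1, t}"
    using exists_partition_card_list[of U ns] assms(1) by blast
  moreover have "\<forall>S\<in>P. \<forall>j\<in>S. stake j = 1"
    using assms(2) partition_onD1[OF P(1)] by blast
  ultimately show ?thesis
    using assms(3) unfolding unit_pool_def by (intro exI[of _ P]) auto
qed

lemma exists_shaped_partition:
  assumes "finite N" "\<forall>i\<in>N. stake i = 1 \<or> stake i = a" "a \<noteq> 1"
    and "card {i\<in>N. stake i = a} = n_b" "card {i\<in>N. stake i = 1} = n_s"
    and "2 \<le> t" "n_b * m + (t - 1)\<^sup>2 \<le> n_s"
  shows "\<exists>P. partition_on N P \<and> P \<noteq> {} \<and> (\<forall>S\<in>P. big_pool stake a m S \<or> unit_pool stake t S)"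
proof -
  define B U where "B = {i\<in>N. stake i = a}" and "U = {i\<in>N. stake i = 1}"
  have "finite B" "finite U" "B \<inter> U = {}" "N = B \<union> U"
    using assms(1-3) unfolding B_def U_def by auto
  obtain X where X: "X \<subseteq> U" "card X = n_b * m"
    using obtain_subset_with_card_n[of "n_b * m" U] assms(5,7) unfolding U_def by force
  have "finite X" "B \<inter> X = {}" "card X = m * card B" "\<forall>L\<in>B. stake L = a" "\<forall>j\<in>X. stake j = 1"
    using X \<open>finite U\<close> \<open>B \<inter> U = {}\<close> assms(4) finite_subset unfolding B_def U_def by auto
  from exists_big_pools[OF \<open>finite B\<close> this]
  obtain P1 where P1: "partition_on (B \<union> X) P1" "\<forall>S\<in>P1. big_pool stake a m S"
    by blast
  have "finite (U - X)" "\<forall>j\<in>U - X. stake j = 1" "2 \<le> t" "(t - 1)\<^sup>2 \<le> card (U - X)"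
    using X \<open>finite U\<close> \<open>finite X\<close> assms(5-7) unfolding U_def by (auto simp: card_Diff_subset)
  from exists_unit_pools[OF this]
  obtain P2 where P2: "partition_on (U - X) P2" "\<forall>S\<in>P2. unit_pool stake t S"
    by blast
  have part: "partition_on N (P1 \<union> P2)"
  proof -
    have "N = (B \<union> X) \<union> (U - X)" "(B \<union> X) \<inter> (U - X) = {}"
      using X \<open>N = B \<union> U\<close> \<open>B \<inter> U = {}\<close> by blast+
    then show ?thesis
      using partition_on_Un[OF P1(1) P2(1)] by simp
  qed
  moreover have "P1 \<union> P2 \<noteq> {}"
  proof -
    have "1 \<le> (t - 1)\<^sup>2"
      using assms(6) by simp
    then have "N \<noteq> {}"
      using assms(5,7) by auto
    then show ?thesis
      using partition_onD1[OF part] by auto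
  qed
  ultimately show ?thesis
    using P1(2) P2(2) by blast
qed

lemma (in stable_params) exists_stable_partition:
  assumes "finite N" "\<forall>i\<in>N. stake i = 1 \<or> stake i = a"
    and "card {i\<in>N. stake i = a} = n_b" "card {i\<in>N. stake i = 1} = n_s"
    and "n_b * m + (t - 1)\<^sup>2 \<le> n_s"
  shows "\<exists>P. nash_eq N stake (a + d) P \<and> P \<noteq> {} \<and> (\<forall>S\<in>P. pool_stake stake S \<le> max (a + m) t)"
proof -
  have "a \<noteq> 1" "2 \<le> t"
    using two_le_a less_t by auto
  then obtain P where P: "partition_on N P" "P \<noteq> {}" "\<forall>S\<in>P. big_pool stake a m S \<or> unit_pool stake t S"
    using exists_shaped_partition[OF assms(1,2) _ assms(3,4) _ assms(5)] by blast
  then show ?thesis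
    using nash_eq_shaped_partition[OF P(1) assms(2) P(3)] shaped_pool_stake_le by blast
qed

lemma pool_stake_partition:
  assumes "finite N" "partition_on N P"
  shows "pool_stake stake N = (\<Sum>S\<in>P. pool_stake stake S)"
proof -
  have "\<forall>S\<in>P. finite S" "\<forall>S\<in>P. \<forall>S'\<in>P. S \<noteq> S' \<longrightarrow> S \<inter> S' = {}"
    using assms unfolding partition_on_def disjoint_def pairwise_def disjnt_def
    by (auto intro: finite_subset)
  then show ?thesis
    unfolding pool_stake_def partition_onD1[OF assms(2)] using sum.Union_disjoint[of P stake] by simp
qed

lemma OPT_mult_le_pool_stake:
  assumes "finite N" "0 < h" "partition_on N P" "\<forall>S\<in>P. winning stake h S"
  shows "OPT N stake h * h \<le> pool_stake stake N"
proof -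
  define Q where "Q = {card P | P. partition_on N P \<and> (\<forall>S\<in>P. winning stake h S)}"
  have bound: "k * h \<le> pool_stake stake N" if k: "k \<in> Q" for k
  proof -
    obtain P' where "partition_on N P'" "\<forall>S\<in>P'. h \<le> pool_stake stake S" "k = card P'"
      using k unfolding Q_def winning_def by blast
    then show ?thesis
      using sum_bounded_below[of P' h "pool_stake stake"] pool_stake_partition[OF assms(1)] by simp
  qed
  have "k \<le> pool_stake stake N" if "k \<in> Q" for k
  proof -
    have "k * 1 \<le> k * h"
      using assms(2) by (intro mult_le_mono2) simp
    also have "\<dots> \<le> pool_stake stake N"
      using bound[OF that] .
    finally show ?thesis
      by simp
  qed
  then have "finite Q"
    by (meson atMost_iff finite_atMost finite_subset subsetI)
  moreover have "Q \<noteq> {}"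
    unfolding Q_def using assms(3,4) by blast
  ultimately have "OPT N stake h \<in> Q"
    unfolding OPT_def Q_def[symmetric] by (rule Max_in)
  then show ?thesis
    by (rule bound)
qed

lemma OPT_div_num_winning_le:
  assumes "finite N" "0 < h" "partition_on N P" "P \<noteq> {}" "\<forall>S\<in>P. winning stake h S"
    and "\<forall>S\<in>P. pool_stake stake S \<le> c * h"
  shows "0 < num_winning stake h P" "real (OPT N stake h) / real (num_winning stake h P) \<le> c"
proof -
  have num: "num_winning stake h P = card P"
    using assms(5) unfolding num_winning_def by (metis (no_types, lifting) Collect_cong Collect_mem_eq)
  have "0 < card P"
    using assms(4) finite_elements[OF assms(1,3)] by (simp add: card_gt_0_iff)
  have "OPT N stake h * h \<le> pool_stake stake N"
    by (rule OPT_mult_le_pool_stake[OF assms(1-3,5)])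
  also have "\<dots> = (\<Sum>S\<in>P. pool_stake stake S)"
    by (rule pool_stake_partition[OF assms(1,3)])
  also have "\<dots> \<le> card P * (c * h)"
    using sum_bounded_above[of P "pool_stake stake" "c * h"] assms(6) by simp
  also have "\<dots> = c * card P * h"
    by simp
  finally have "OPT N stake h \<le> c * card P"
    by (rule mult_right_le_imp_le) (use assms(2) in simp)
  then have "real (OPT N stake h) \<le> real c * real (card P)"
    by (metis of_nat_le_iff of_nat_mult)
  then show "0 < num_winning stake h P" "real (OPT N stake h) / real (num_winning stake h P) \<le> c"
    using \<open>0 < card P\<close> num by (simp_all add: divide_le_eq)
qed

theorem theorem3p6:
  fixes N :: "'a set" and stake :: "'a \<Rightarrow> nat" and h a n_b n_s :: nat
  assumes "finite N"
    and "2 \<le> a" and "a \<le> h - 1"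
    and "\<forall>i\<in>N. stake i = 1 \<or> stake i = a"
    and "card {i\<in>N. stake i = a} = n_b"
    and "card {i\<in>N. stake i = 1} = n_s"
    and "n_s \<ge> (2 * h - 1)^2 + n_b * (h + 1)"
  shows "\<exists>P. nash_eq N stake h P \<and> num_winning stake h P > 0 \<and>
             real (OPT N stake h) / real (num_winning stake h P) \<le> 2"
proof -
  define d where "d = h - a"
  have h: "h = a + d" and "1 \<le> d"
    using assms(2,3) unfolding d_def by auto
  obtain m t where "stable_params a d m t" and "t \<le> 2 * h"
    using exists_stable_params[OF assms(2) \<open>1 \<le> d\<close>] h by blast
  interpret stable_params a d m t
    by fact
  have "(t - 1)\<^sup>2 \<le> (2 * h - 1)\<^sup>2"
    using \<open>t \<le> 2 * h\<close> by (simp add: power_mono)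
  moreover have "n_b * m \<le> n_b * (h + 1)"
    using m_less h by (intro mult_le_mono2) simp
  ultimately have "n_b * m + (t - 1)\<^sup>2 \<le> n_s"
    using assms(7) by linarith
  from exists_stable_partition[OF assms(1,4-6) this]
  obtain P where P: "nash_eq N stake h P" "P \<noteq> {}" "\<forall>S\<in>P. pool_stake stake S \<le> max (a + m) t"
    unfolding h by blast
  have "max (a + m) t \<le> 2 * h" "0 < h"
    using m_less \<open>t \<le> 2 * h\<close> h two_le_a by auto
  have part: "partition_on N P" and win: "\<forall>S\<in>P. winning stake h S"
    using P(1) unfolding nash_eq_def by auto
  have "\<forall>S\<in>P. pool_stake stake S \<le> 2 * h"
    using order.trans[OF P(3)[rule_format] \<open>max (a + m) t \<le> 2 * h\<close>] by blast
  from OPT_div_num_winning_le[OF assms(1) \<open>0 < h\<close> part P(2) win this] P(1)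
  show ?thesis
    by (intro exI[of _ P]) simp
qed

end
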